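(* Let $L$ be the adjoint module of $gl(1|1)$. For every $n\ge1$, the space of invariant tensors $\mathrm{Inv}(L^{\otimes n})=\{v\in L^{\otimes n}: g v=0\ \text{for all } g\in gl(1|1)\}$ has dimension $\binom{2n-2}{n-1}$.
   Context: $gl(1|1)$ is the Lie superalgebra with basis $H,G$ (even), $Q_+,Q_-$ (odd), nonzero supercommutators $[G,Q_\pm]=\pm Q_\pm$, $[Q_+,Q_-]=H$. It acts on $L^{\otimes n}$ (where $L=gl(1|1)$ with the adjoint action) by the super Leibniz rule with Koszul signs. *)

theory Defs
  imports Complex_Main "HOL-Library.Function_Algebras"
begin

text \<open>Basis of gl(1|1): H, G even; Qp = Q_+, Qm = Q_- odd.\<close>
datatype gl11 = H | G | Qp | Qm

fun par :: "gl11 \<Rightarrow> nat" where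
  "par H = 0" | "par G = 0" | "par Qp = 1" | "par Qm = 1"

definition unitv :: "gl11 \<Rightarrow> gl11 \<Rightarrow> complex" where
  "unitv a = (\<lambda>b. if b = a then 1 else 0)"

text \<open>Supercommutator of basis elements, as a coordinate vector in L = gl(1|1).\<close>
fun br :: "gl11 \<Rightarrow> gl11 \<Rightarrow> gl11 \<Rightarrow> complex" where
  "br G Qp = unitv Qp"
| "br G Qm = (\<lambda>b. - unitv Qm b)"
| "br Qp G = (\<lambda>b. - unitv Qp b)"
| "br Qm G = unitv Qm"
| "br Qp Qm = unitv H"
| "br Qm Qp = unitv H"
| "br _ _ = (\<lambda>_. 0)"

text \<open>Vectors of L^{\<otimes>n}: coordinate functions on words (basis tensors
  e_{w1} \<otimes> ... \<otimes> e_{wn}) of length n, vanishing on other words.\<close>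
definition words :: "nat \<Rightarrow> gl11 list set" where
  "words n = set (List.n_lists n [H, G, Qp, Qm])"

definition tensor_space :: "nat \<Rightarrow> (gl11 list \<Rightarrow> complex) set" where
  "tensor_space n = {v. \<forall>w. length w \<noteq> n \<longrightarrow> v w = 0}"

text \<open>The basis tensor w with its i-th factor replaced by the vector c of L.\<close>
definition subst_at :: "gl11 list \<Rightarrow> nat \<Rightarrow> (gl11 \<Rightarrow> complex) \<Rightarrow> gl11 list \<Rightarrow> complex" where
  "subst_at w i c = (\<lambda>w'. if length w' = length w \<and> (\<forall>j<length w. j \<noteq> i \<longrightarrow> w' ! j = w ! j)
                          then c (w' ! i) else 0)"

text \<open>Super Leibniz rule with Koszul signs: action of basis element a on a basis tensor.\<close>
definition act_word :: "gl11 \<Rightarrow> gl11 list \<Rightarrow> gl11 list \<Rightarrow> complex" where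
  "act_word a w = (\<lambda>w'. \<Sum>i<length w.
      (-1) ^ (par a * (\<Sum>j<i. par (w ! j))) * subst_at w i (br a (w ! i)) w')"

definition act_basis :: "gl11 \<Rightarrow> nat \<Rightarrow> (gl11 list \<Rightarrow> complex) \<Rightarrow> gl11 list \<Rightarrow> complex" where
  "act_basis a n v = (\<lambda>w'. \<Sum>w\<in>words n. v w * act_word a w w')"

text \<open>Action of a general element x = \<Sum> x(a) a of gl(1|1) on L^{\<otimes>n}.\<close>
definition act :: "(gl11 \<Rightarrow> complex) \<Rightarrow> nat \<Rightarrow> (gl11 list \<Rightarrow> complex) \<Rightarrow> gl11 list \<Rightarrow> complex" where
  "act x n v = (\<lambda>w'. \<Sum>a\<in>{H, G, Qp, Qm}. x a * act_basis a n v w')"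

definition Inv :: "nat \<Rightarrow> (gl11 list \<Rightarrow> complex) set" where
  "Inv n = {v \<in> tensor_space n. \<forall>x. act x n v = (\<lambda>_. 0)}"

definition cscale :: "complex \<Rightarrow> (gl11 list \<Rightarrow> complex) \<Rightarrow> gl11 list \<Rightarrow> complex" where
  "cscale c v = (\<lambda>w. c * v w)"

end

theory Submission
  imports Defs
begin

(* Expand a tensor of L^(m+1) along its first factor:
   v = H \<otimes> d + G \<otimes> g + Qp \<otimes> p + Qm \<otimes> q.
   H is central, so it acts by zero, and G acts by the weight (the number of Qp factors minus the
   number of Qm factors). The coefficients of H \<otimes> _ and Qp \<otimes> _ in Qp v and Qm v force
   p = - Qm d, q = - Qp d and g = Qp (Qm d). Conversely, for every d of weight zero these formulas
   give an invariant, because Qp^2 = Qm^2 = Qp Qm + Qm Qp = 0 on tensors. So d \<mapsto> v is a linear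
   isomorphism from the weight-zero subspace of L^m onto the invariants of L^(m+1); the former is
   spanned by the words with as many Qp as Qm letters, and there are binomial(2m, m) of them. *)

lemma gl11_in_basis: "a \<in> {H, G, Qp, Qm}"
  by (cases a) auto

lemma words_altdef: "words n = {w. length w = n}"
  unfolding words_def set_n_lists using gl11_in_basis by auto

lemma finite_words: "finite (words n)"
  unfolding words_def by simp

lemma sum_words_Suc:
  "(\<Sum>w\<in>words (Suc m). f w) = (\<Sum>e\<in>{H, G, Qp, Qm}. \<Sum>u\<in>words m. f (e # u))"
proof -
  have words_Suc: "words (Suc m) = (\<lambda>(e, u). e # u) ` ({H, G, Qp, Qm} \<times> words m)"
    unfolding words_altdef
    by (auto simp: image_iff length_Suc_conv) (metis gl11_in_basis insertE singletonD)
  have inj: "inj_on (\<lambda>(e, u). e # u) ({H, G, Qp, Qm} \<times> words m)"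
    by (auto simp: inj_on_def)
  show ?thesis
    unfolding words_Suc sum.reindex[OF inj] sum.cartesian_product by (simp add: case_prod_unfold)
qed

lemma subst_at_Cons_0:
  "subst_at (e # w) 0 c (e' # u) = (if u = w then c e' else 0)"
  unfolding subst_at_def by (auto simp: list_eq_iff_nth_eq less_Suc_eq_0_disj)

lemma subst_at_Cons_Suc:
  "subst_at (e # w) (Suc i) c (e' # u) = (if e = e' then subst_at w i c u else 0)"
  unfolding subst_at_def by (auto simp: less_Suc_eq_0_disj)

lemma act_word_Cons:
  "act_word a (e # w) (e' # u) =
     (if u = w then br a e e' else 0) + (if e = e' then (-1) ^ (par a * par e) * act_word a w u else 0)"
proof -
  have "act_word a (e # w) (e' # u) = subst_at (e # w) 0 (br a e) (e' # u) +
     (\<Sum>i<length w. (-1) ^ (par a * (par e + (\<Sum>j<i. par (w ! j)))) *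
        subst_at (e # w) (Suc i) (br a (w ! i)) (e' # u))"
    unfolding act_word_def by (simp add: sum.lessThan_Suc_shift del: sum.lessThan_Suc)
  then show ?thesis
    unfolding subst_at_Cons_0 subst_at_Cons_Suc act_word_def
    by (auto simp: sum_distrib_left power_add distrib_left intro!: sum.cong)
qed

lemma act_word_length: "length w' \<noteq> length w \<Longrightarrow> act_word a w w' = 0"
  by (simp add: act_word_def subst_at_def)

lemma act_basis_Nil: "act_basis a n v [] = 0"
proof (cases n)
  case 0
  then have "words n = {[]}" by (auto simp: words_altdef)
  then show ?thesis by (simp add: act_basis_def act_word_def)
next
  case (Suc m)
  then show ?thesis by (auto simp: act_basis_def words_altdef act_word_length intro!: sum.neutral)
qed

lemma act_basis_Cons:
  "act_basis a (Suc m) v (e' # u) =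
     (if length u = m then \<Sum>e\<in>{H, G, Qp, Qm}. br a e e' * v (e # u) else 0)
     + (-1) ^ (par a * par e') * act_basis a m (\<lambda>u. v (e' # u)) u"
proof -
  let ?E = "{H, G, Qp, Qm}" and ?s = "\<lambda>e. (-1::complex) ^ (par a * par e)"
  have "act_basis a (Suc m) v (e' # u) = (\<Sum>e\<in>?E. \<Sum>w\<in>words m.
      v (e # w) * ((if u = w then br a e e' else 0) + (if e = e' then ?s e * act_word a w u else 0)))"
    by (simp add: act_basis_def sum_words_Suc act_word_Cons del: insert_iff)
  also have "\<dots> = (\<Sum>e\<in>?E. \<Sum>w\<in>words m. (if u = w then v (e # w) * br a e e' else 0)) +
      (\<Sum>e\<in>?E. if e = e' then (\<Sum>w\<in>words m. ?s e * (v (e # w) * act_word a w u)) else 0)"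
  proof -
    have "v (e # w) * ((if u = w then br a e e' else 0) + (if e = e' then ?s e * act_word a w u else 0))
       = (if u = w then v (e # w) * br a e e' else 0)
         + (if e = e' then ?s e * (v (e # w) * act_word a w u) else 0)"
      for e w by (auto simp: algebra_simps)
    moreover have "(\<Sum>w\<in>words m. (if e = e' then ?s e * (v (e # w) * act_word a w u) else 0))
      = (if e = e' then (\<Sum>w\<in>words m. ?s e * (v (e # w) * act_word a w u)) else 0)" for e
      by auto
    ultimately show ?thesis by (simp only: sum.distrib)
  qed
  also have "\<dots> = (if length u = m then (\<Sum>e\<in>?E. br a e e' * v (e # u)) else 0) +
      ?s e' * act_basis a m (\<lambda>w. v (e' # w)) u"
    by (simp add: finite_words act_basis_def sum_distrib_left del: insert_iff)
      (simp add: words_altdef gl11_in_basis mult_ac del: insert_iff)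
  finally show ?thesis .
qed

fun act_coeff :: "gl11 \<Rightarrow> (gl11 list \<Rightarrow> complex) \<Rightarrow> gl11 list \<Rightarrow> complex" where
  "act_coeff a v [] = 0"
| "act_coeff a v (e' # u) = (\<Sum>e\<in>{H, G, Qp, Qm}. br a e e' * v (e # u))
     + (-1) ^ (par a * par e') * act_coeff a (\<lambda>u. v (e' # u)) u"

lemma act_basis_eq_act_coeff:
  "act_basis a n v w = (if length w = n then act_coeff a v w else 0)"
proof (induction n arbitrary: v w)
  case 0
  then show ?case
    by (cases w) (simp_all add: act_basis_Nil act_basis_def words_altdef act_word_def)
next
  case (Suc m)
  then show ?case
    by (cases w) (simp_all add: act_basis_Nil act_basis_Cons mult_ac)
qed

lemma act_coeff_eq_0: "(\<And>w. length w = length u \<Longrightarrow> v w = 0) \<Longrightarrow> act_coeff a v u = 0"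
  by (induction u arbitrary: v) auto

lemma act_coeff_lincomb:
  "act_coeff a (\<lambda>w. c * f w + d * g w) u = c * act_coeff a f u + d * act_coeff a g u"
  by (induction u arbitrary: f g) (auto simp: algebra_simps sum.distrib sum_distrib_left)

lemma act_coeff_add: "act_coeff a (\<lambda>w. f w + g w) = (\<lambda>u. act_coeff a f u + act_coeff a g u)"
  using act_coeff_lincomb[of a 1 f 1 g] by (simp add: fun_eq_iff)

lemma act_coeff_scale: "act_coeff a (\<lambda>w. c * f w) = (\<lambda>u. c * act_coeff a f u)"
  using act_coeff_lincomb[of a c f 0 f] by (simp add: fun_eq_iff)

lemma act_coeff_minus: "act_coeff a (\<lambda>w. - f w) = (\<lambda>u. - act_coeff a f u)"
  using act_coeff_lincomb[of a "-1" f 0 f] by (simp add: fun_eq_iff)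

lemma act_coeff_diff: "act_coeff a (\<lambda>w. f w - g w) = (\<lambda>u. act_coeff a f u - act_coeff a g u)"
  using act_coeff_lincomb[of a 1 f "-1" g] by (simp add: fun_eq_iff)

lemma act_coeff_zero: "act_coeff a (\<lambda>_. 0) = (\<lambda>_. 0)"
  by (auto intro: act_coeff_eq_0)

lemma act_coeff_H: "act_coeff H v u = 0"
  by (induction u arbitrary: v) auto

fun wt :: "gl11 \<Rightarrow> int" where
  "wt Qp = 1" | "wt Qm = -1" | "wt H = 0" | "wt G = 0"

definition weight :: "gl11 list \<Rightarrow> int" where
  "weight w = sum_list (map wt w)"

lemma weight_Cons [simp]: "weight (e # w) = wt e + weight w"
  by (simp add: weight_def)

lemma act_coeff_G: "act_coeff G v u = of_int (weight u) * v u"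
proof (induction u arbitrary: v)
  case Nil
  then show ?case by (simp add: weight_def)
next
  case (Cons e u)
  then show ?case by (cases e) (auto simp: unitv_def algebra_simps)
qed

lemma br_weight: "br a b c \<noteq> 0 \<Longrightarrow> wt c = wt a + wt b"
  by (cases a; cases b; cases c) (simp_all add: unitv_def)

definition has_weight :: "int \<Rightarrow> (gl11 list \<Rightarrow> complex) \<Rightarrow> bool" where
  "has_weight k v \<longleftrightarrow> (\<forall>w. v w \<noteq> 0 \<longrightarrow> weight w = k)"

lemma has_weight_act_coeff:
  assumes "has_weight k v"
  shows "has_weight (k + wt a) (act_coeff a v)"
  unfolding has_weight_def
proof (intro allI impI)
  fix w
  show "act_coeff a v w \<noteq> 0 \<Longrightarrow> weight w = k + wt a"
    using assms
  proof (induction w arbitrary: k v)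
    case (Cons e u)
    show ?case
    proof (cases "(\<Sum>e'\<in>{H, G, Qp, Qm}. br a e' e * v (e' # u)) = 0")
      case True
      then have "act_coeff a (\<lambda>u. v (e # u)) u \<noteq> 0"
        using Cons.prems(1) by auto
      moreover have "has_weight (k - wt e) (\<lambda>u. v (e # u))"
        using Cons.prems(2) by (auto simp: has_weight_def)
      ultimately have "weight u = k - wt e + wt a"
        by (rule Cons.IH)
      then show ?thesis by simp
    next
      case False
      then obtain e' where "br a e' e * v (e' # u) \<noteq> 0"
        by (metis (no_types, lifting) sum.neutral)
      then have "wt e = wt a + wt e'" and "weight (e' # u) = k"
        using br_weight Cons.prems(2) unfolding has_weight_def by auto
      then show ?thesis by simp
    qed
  qed simp
qed

lemma act_coeff_Qp_Cons:
  "act_coeff Qp v (H # u) = v (Qm # u) + act_coeff Qp (\<lambda>u. v (H # u)) u"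
  "act_coeff Qp v (G # u) = act_coeff Qp (\<lambda>u. v (G # u)) u"
  "act_coeff Qp v (Qp # u) = - v (G # u) - act_coeff Qp (\<lambda>u. v (Qp # u)) u"
  "act_coeff Qp v (Qm # u) = - act_coeff Qp (\<lambda>u. v (Qm # u)) u"
  by (simp_all add: unitv_def)

lemma act_coeff_Qm_Cons:
  "act_coeff Qm v (H # u) = v (Qp # u) + act_coeff Qm (\<lambda>u. v (H # u)) u"
  "act_coeff Qm v (G # u) = act_coeff Qm (\<lambda>u. v (G # u)) u"
  "act_coeff Qm v (Qp # u) = - act_coeff Qm (\<lambda>u. v (Qp # u)) u"
  "act_coeff Qm v (Qm # u) = v (G # u) - act_coeff Qm (\<lambda>u. v (Qm # u)) u"
  by (simp_all add: unitv_def)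

declare act_coeff.simps(2) [simp del]

lemma act_coeff_Qp_Qp: "act_coeff Qp (act_coeff Qp v) = (\<lambda>_. 0)"
proof
  show "act_coeff Qp (act_coeff Qp v) u = 0" for u
  proof (induction u arbitrary: v)
    case (Cons e u)
    then show ?case
      by (cases e) (simp_all add: act_coeff_Qp_Cons act_coeff_add act_coeff_minus act_coeff_diff)
  qed simp
qed

lemma act_coeff_Qm_Qm: "act_coeff Qm (act_coeff Qm v) = (\<lambda>_. 0)"
proof
  show "act_coeff Qm (act_coeff Qm v) u = 0" for u
  proof (induction u arbitrary: v)
    case (Cons e u)
    then show ?case
      by (cases e) (simp_all add: act_coeff_Qm_Cons act_coeff_add act_coeff_minus act_coeff_diff)
  qed simp
qed

lemma act_coeff_Qm_Qp: "act_coeff Qm (act_coeff Qp v) = (\<lambda>u. - act_coeff Qp (act_coeff Qm v) u)"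
proof
  show "act_coeff Qm (act_coeff Qp v) u = - act_coeff Qp (act_coeff Qm v) u" for u
  proof (induction u arbitrary: v)
    case (Cons e u)
    then show ?case
      by (cases e) (simp_all add: act_coeff_Qp_Cons act_coeff_Qm_Cons act_coeff_add act_coeff_minus
          act_coeff_diff)
  qed simp
qed

lemma act_unitv: "act (unitv a) n v = act_basis a n v"
  by (cases a) (simp_all add: act_def unitv_def)

lemma Inv_iff_act_coeff:
  "v \<in> Inv n \<longleftrightarrow> v \<in> tensor_space n \<and> (\<forall>a. act_coeff a v = (\<lambda>_. 0))"
proof
  assume v: "v \<in> Inv n"
  then have ts: "v \<in> tensor_space n" and inv: "\<And>x. act x n v = (\<lambda>_. 0)"
    by (auto simp: Inv_def)
  have "act_coeff a v w = 0" for a w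
  proof (cases "length w = n")
    case True
    then show ?thesis
      using fun_cong[OF inv[of "unitv a"], of w] by (simp add: act_unitv act_basis_eq_act_coeff)
  next
    case False
    then show ?thesis
      using ts by (intro act_coeff_eq_0) (auto simp: tensor_space_def)
  qed
  then show "v \<in> tensor_space n \<and> (\<forall>a. act_coeff a v = (\<lambda>_. 0))"
    using ts by auto
next
  assume v: "v \<in> tensor_space n \<and> (\<forall>a. act_coeff a v = (\<lambda>_. 0))"
  then have "act_coeff a v w = 0" for a w
    by simp
  with v show "v \<in> Inv n"
    by (simp add: Inv_def act_def act_basis_eq_act_coeff fun_eq_iff)
qed

lemma act_coeff_G_eq_0_iff: "act_coeff G v = (\<lambda>_. 0) \<longleftrightarrow> has_weight 0 v"
  by (auto simp: fun_eq_iff act_coeff_G has_weight_def)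

lemma Inv_iff:
  "v \<in> Inv n \<longleftrightarrow> v \<in> tensor_space n \<and> has_weight 0 v
     \<and> act_coeff Qp v = (\<lambda>_. 0) \<and> act_coeff Qm v = (\<lambda>_. 0)"
proof -
  have "(\<forall>a. act_coeff a v = (\<lambda>_. 0)) \<longleftrightarrow>
      act_coeff G v = (\<lambda>_. 0) \<and> act_coeff Qp v = (\<lambda>_. 0) \<and> act_coeff Qm v = (\<lambda>_. 0)"
    by (metis (full_types) act_coeff_H gl11.exhaust)
  then show ?thesis
    by (simp add: Inv_iff_act_coeff act_coeff_G_eq_0_iff)
qed

fun inv_lift :: "(gl11 list \<Rightarrow> complex) \<Rightarrow> gl11 list \<Rightarrow> complex" where
  "inv_lift d [] = 0"
| "inv_lift d (H # u) = d u"
| "inv_lift d (Qp # u) = - act_coeff Qm d u"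
| "inv_lift d (Qm # u) = - act_coeff Qp d u"
| "inv_lift d (G # u) = act_coeff Qp (act_coeff Qm d) u"

lemma inv_lift_in_Inv:
  assumes d: "d \<in> tensor_space m" "has_weight 0 d"
  shows "inv_lift d \<in> Inv (Suc m)"
  unfolding Inv_iff
proof (intro conjI)
  show "inv_lift d \<in> tensor_space (Suc m)"
    unfolding tensor_space_def
  proof (intro CollectI allI impI)
    fix w :: "gl11 list"
    assume "length w \<noteq> Suc m"
    then show "inv_lift d w = 0"
      using d(1)
      by (cases "(d, w)" rule: inv_lift.cases) (auto simp: tensor_space_def intro!: act_coeff_eq_0)
  qed
  have Qm_d: "has_weight (-1) (act_coeff Qm d)" and Qp_d: "has_weight 1 (act_coeff Qp d)"
    using has_weight_act_coeff[OF d(2), of Qm] has_weight_act_coeff[OF d(2), of Qp] by simp_all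
  have QpQm_d: "has_weight 0 (act_coeff Qp (act_coeff Qm d))"
    using has_weight_act_coeff[OF Qm_d, of Qp] by simp
  show "has_weight 0 (inv_lift d)"
    unfolding has_weight_def
  proof (intro allI impI)
    fix w
    assume "inv_lift d w \<noteq> 0"
    then show "weight w = 0"
      using d(2) Qm_d Qp_d QpQm_d by (cases "(d, w)" rule: inv_lift.cases) (auto simp: has_weight_def)
  qed
  show "act_coeff Qp (inv_lift d) = (\<lambda>_. 0)"
  proof
    show "act_coeff Qp (inv_lift d) w = 0" for w
      by (cases w; cases "hd w")
        (simp_all add: act_coeff_Qp_Cons act_coeff_minus act_coeff_Qp_Qp act_coeff_zero)
  qed
  show "act_coeff Qm (inv_lift d) = (\<lambda>_. 0)"
  proof
    show "act_coeff Qm (inv_lift d) w = 0" for w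
      by (cases w; cases "hd w")
        (simp_all add: act_coeff_Qm_Cons act_coeff_minus act_coeff_Qm_Qm act_coeff_Qm_Qp
          act_coeff_zero)
  qed
qed

lemma Inv_eq_inv_lift:
  assumes v: "v \<in> Inv (Suc m)"
  shows "v = inv_lift (\<lambda>u. v (H # u))"
proof
  fix w
  let ?d = "\<lambda>u. v (H # u)"
  from v have ts: "v \<in> tensor_space (Suc m)"
    and Qp_v: "act_coeff Qp v = (\<lambda>_. 0)" and Qm_v: "act_coeff Qm v = (\<lambda>_. 0)"
    by (auto simp: Inv_iff)
  have Qp_slice: "v (Qp # u) = - act_coeff Qm ?d u" for u
    using fun_cong[OF Qm_v, of "H # u"] by (simp add: act_coeff_Qm_Cons eq_neg_iff_add_eq_0)
  have Qm_slice: "v (Qm # u) = - act_coeff Qp ?d u" for u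
    using fun_cong[OF Qp_v, of "H # u"] by (simp add: act_coeff_Qp_Cons eq_neg_iff_add_eq_0)
  have G_slice: "v (G # u) = act_coeff Qp (act_coeff Qm ?d) u" for u
    using fun_cong[OF Qp_v, of "Qp # u"]
    by (simp add: act_coeff_Qp_Cons Qp_slice[abs_def] act_coeff_minus)
  show "v w = inv_lift ?d w"
    using ts Qp_slice Qm_slice G_slice
    by (cases "(?d, w)" rule: inv_lift.cases) (simp_all add: tensor_space_def)
qed

lemma Inv_Suc_eq_image_inv_lift:
  "Inv (Suc m) = inv_lift ` {d \<in> tensor_space m. has_weight 0 d}"
proof (intro equalityI subsetI)
  fix v
  assume v: "v \<in> Inv (Suc m)"
  then have "(\<lambda>u. v (H # u)) \<in> tensor_space m" "has_weight 0 (\<lambda>u. v (H # u))"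
    by (auto simp: Inv_iff tensor_space_def has_weight_def)
  then show "v \<in> inv_lift ` {d \<in> tensor_space m. has_weight 0 d}"
    using Inv_eq_inv_lift[OF v] by blast
qed (auto intro: inv_lift_in_Inv)

interpretation cs: vector_space cscale
  by unfold_locales (auto simp: cscale_def algebra_simps fun_eq_iff)

lemma sum_apply: "(\<Sum>a\<in>A. f a) x = (\<Sum>a\<in>A. f a x)"
  by (induction A rule: infinite_finite_induct) auto

definition basis_tensor :: "gl11 list \<Rightarrow> gl11 list \<Rightarrow> complex" where
  "basis_tensor w = (\<lambda>u. if u = w then 1 else 0)"

lemma inj_basis_tensor: "inj basis_tensor"
  by (rule injI) (metis basis_tensor_def zero_neq_one)

lemma span_basis_tensors:
  assumes "finite A"
  shows "cs.span (basis_tensor ` A) = {v. \<forall>w. w \<notin> A \<longrightarrow> v w = 0}"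
proof (rule cs.span_subspace)
  show "basis_tensor ` A \<subseteq> {v. \<forall>w. w \<notin> A \<longrightarrow> v w = 0}"
    by (auto simp: basis_tensor_def)
  show "cs.subspace {v. \<forall>w. w \<notin> A \<longrightarrow> v w = 0}"
    by (auto simp: cs.subspace_def cscale_def)
  show "{v. \<forall>w. w \<notin> A \<longrightarrow> v w = 0} \<subseteq> cs.span (basis_tensor ` A)"
  proof
    fix v :: "gl11 list \<Rightarrow> complex"
    assume "v \<in> {v. \<forall>w. w \<notin> A \<longrightarrow> v w = 0}"
    then have "v = (\<Sum>w\<in>A. cscale (v w) (basis_tensor w))"
      using assms
      by (auto simp: fun_eq_iff sum_apply cscale_def basis_tensor_def if_distrib cong: if_cong)
    also have "\<dots> \<in> cs.span (basis_tensor ` A)"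
      by (intro cs.span_sum cs.span_scale cs.span_base imageI)
    finally show "v \<in> cs.span (basis_tensor ` A)" .
  qed
qed

lemma independent_basis_tensors: "cs.independent (basis_tensor ` A)"
  unfolding cs.independent_explicit_module
proof (intro allI impI)
  fix t c v
  assume t: "finite t" "t \<subseteq> basis_tensor ` A"
    and lincomb: "(\<Sum>x\<in>t. cscale (c x) x) = 0" and "v \<in> t"
  then obtain w where v: "v = basis_tensor w"
    by auto
  have coeff: "x w = (if x = v then 1 else 0)" if "x \<in> t" for x
    using that t(2) v by (auto simp: basis_tensor_def)
  have "(\<Sum>x\<in>t. cscale (c x) x) w = (\<Sum>x\<in>t. if x = v then c x else 0)"
    unfolding sum_apply cscale_def by (rule sum.cong) (simp_all add: coeff)
  also have "\<dots> = c v"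
    using t(1) \<open>v \<in> t\<close> by simp
  finally show "c v = 0"
    using lincomb by simp
qed

lemma dim_image_span:
  assumes "Vector_Spaces.linear cscale cscale f" "inj f" "cs.independent B"
  shows "cs.dim (f ` cs.span B) = card B"
proof -
  interpret f: Vector_Spaces.linear cscale cscale f
    by fact
  have "cs.independent (f ` B)"
    by (rule f.independent_injective_image[OF assms(3) inj_on_subset[OF assms(2)]]) simp
  then have "cs.dim (f ` cs.span B) = card (f ` B)"
    by (simp flip: f.span_image add: cs.dim_eq_card_independent)
  also have "\<dots> = card B"
    using assms(2) by (simp add: card_image inj_on_subset)
  finally show ?thesis .
qed

lemma linear_inv_lift: "Vector_Spaces.linear cscale cscale inv_lift"
proof -
  have "inv_lift (x + y) w = (inv_lift x + inv_lift y) w" for x y w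
    by (cases w; cases "hd w") (simp_all add: plus_fun_def act_coeff_add)
  moreover have "inv_lift (cscale c x) w = cscale c (inv_lift x) w" for c x w
    by (cases w; cases "hd w") (simp_all add: cscale_def act_coeff_scale)
  ultimately show ?thesis
    by (auto simp: Vector_Spaces.linear_iff cs.vector_space_axioms)
qed

lemma inj_inv_lift: "inj inv_lift"
proof (rule injI)
  fix d d'
  assume "inv_lift d = inv_lift d'"
  then have "inv_lift d (H # u) = inv_lift d' (H # u)" for u
    by simp
  then show "d = d'"
    by auto
qed

lemma dim_Inv_Suc: "cs.dim (Inv (Suc m)) = card {w \<in> words m. weight w = 0}"
proof -
  let ?W = "{w \<in> words m. weight w = 0}"
  have "{d \<in> tensor_space m. has_weight 0 d} = {d. \<forall>w. w \<notin> ?W \<longrightarrow> d w = 0}"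
    by (auto simp: tensor_space_def has_weight_def words_altdef)
  also have "\<dots> = cs.span (basis_tensor ` ?W)"
    by (simp add: span_basis_tensors finite_words)
  finally have "Inv (Suc m) = inv_lift ` cs.span (basis_tensor ` ?W)"
    by (simp add: Inv_Suc_eq_image_inv_lift)
  then have "cs.dim (Inv (Suc m)) = card (basis_tensor ` ?W)"
    by (simp add: dim_image_span linear_inv_lift inj_inv_lift independent_basis_tensors)
  also have "\<dots> = card ?W"
    by (simp add: card_image inj_on_subset[OF inj_basis_tensor])
  finally show ?thesis .
qed

(* The letters Qp, H, G, Qm contribute 2, 1, 1, 0, like the number of ones in 11, 10, 01, 00;
   so words of length m are counted by the binomial coefficients of (1 + x)^(2m). *)
definition shifted_weight :: "gl11 list \<Rightarrow> nat" where
  "shifted_weight w = (\<Sum>e\<leftarrow>w. nat (wt e + 1))"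

lemma int_shifted_weight: "int (shifted_weight w) = weight w + int (length w)"
proof (induction w)
  case (Cons e w)
  then show ?case by (cases e) (auto simp: shifted_weight_def)
qed (simp add: shifted_weight_def weight_def)

lemma card_words_filter: "card {w \<in> words m. P w} = (\<Sum>w\<in>words m. if P w then 1 else 0)"
  by (simp add: sum.inter_filter[OF finite_words, symmetric])

lemma card_words_shifted_weight: "card {w \<in> words m. shifted_weight w = j} = (2 * m) choose j"
proof (induction m arbitrary: j)
  case 0
  have "words 0 = {[]}"
    by (auto simp: words_altdef)
  then show ?case
    unfolding card_words_filter by (simp add: shifted_weight_def)
next
  case (Suc m)
  let ?c = "\<lambda>i. card {w \<in> words m. shifted_weight w = i}"
  have shift: "(\<Sum>u\<in>words m. if k + shifted_weight u = j then 1 else 0)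
      = (if k \<le> j then ?c (j - k) else 0)" for k
    by (auto simp: card_words_filter intro!: sum.cong sum.neutral)
  have "card {w \<in> words (Suc m). shifted_weight w = j}
      = (\<Sum>e\<in>{H, G, Qp, Qm}. \<Sum>u\<in>words m. if nat (wt e + 1) + shifted_weight u = j then 1 else 0)"
    by (simp add: card_words_filter sum_words_Suc shifted_weight_def)
  also have "\<dots> = (if 2 \<le> j then ?c (j - 2) else 0) + 2 * (if 1 \<le> j then ?c (j - 1) else 0) + ?c j"
    by (simp add: shift)
  also have "\<dots> = (2 * Suc m) choose j"
    using Suc.IH by (cases j; cases "j - 1") simp_all
  finally show ?case .
qed

lemma card_weight_zero_words: "card {w \<in> words m. weight w = 0} = (2 * m) choose m"
proof -
  have "weight w = 0 \<longleftrightarrow> shifted_weight w = m" if "length w = m" for w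
    using int_shifted_weight[of w] that by linarith
  then have "{w \<in> words m. weight w = 0} = {w \<in> words m. shifted_weight w = m}"
    by (auto simp: words_altdef)
  then show ?thesis
    by (simp add: card_words_shifted_weight)
qed

theorem proposition2p5:
  fixes n :: nat
  assumes "n \<ge> 1"
  shows "vector_space.dim cscale (Inv n) = (2 * n - 2) choose (n - 1)"
proof -
  obtain m where n: "n = Suc m"
    using assms by (cases n) auto
  have "cs.dim (Inv (Suc m)) = (2 * m) choose m"
    by (simp add: dim_Inv_Suc card_weight_zero_words)
  then show ?thesis
    by (simp add: n)
qed

end
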